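(* For $1\le j\le n$ let $\varrho_j=\prod_{s=n-j+1}^n\Omega(b_s|y)^{-1}$, regarded as a multiplication operator on $\hat\Lambda$. Then for every $i\in\{0,1,\dots,n-1\}$, $$D_i\circ\varrho_j=\varrho_j\circ\big(\omega^{-j}\circ D_{i+j}\circ\omega^{j}\big),$$ where the subscript $i+j$ is taken modulo $n$ (so $D_n=D_0$).
   Context: Fix $n\ge2$. $R(T)=\mathbb{Z}[e^{\pm a_1},\dots,e^{\pm a_n}]/(e^{a_1+\cdots+a_n}-1)$; subscripts of $a_i,b_i$ mod $n$ in $\{1,\dots,n\}$; $b_i=1-e^{-a_i}$. $\hat\Lambda$: symmetric formal power series in $y=(y_1,y_2,\dots)$ with coefficients in the fraction field of $R(T)$; $\Omega(b_i|y)=\prod_{j\ge1}(1-b_iy_j)^{-1}$. For $1\le i\le n-1$, $s_i$ exchanges $a_i,a_{i+1}$ in coefficients; $s_\theta$ exchanges $a_1,a_n$; $s_0(f)=\frac{\Omega(b_1|y)}{\Omega(b_n|y)}s_\theta(f)$. $\alpha_i=a_i-a_{i+1}$ ($1\le i\le n-1$), $\alpha_0=a_n-a_1$, $D_i=1+(1-e^{\alpha_i})^{-1}(s_i-1)$. $\omega$ is the ring automorphism of $\hat\Lambda$ acting on coefficients by $a_s\mapsto a_{s+1}$ (fixing $y$), so $\omega(\Omega(b_s|y))=\Omega(b_{s+1}|y)$. *)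

theory Defs
  imports "HOL-Library.Poly_Mapping" "HOL-Computational_Algebra.Fraction_Field"
begin

text \<open>Laurent polynomials with integer coefficients in countably many variables X_0, X_1, ...\<close>

type_synonym lexp = "nat \<Rightarrow>\<^sub>0 int"
type_synonym lpoly = "lexp \<Rightarrow>\<^sub>0 int"
type_synonym coeff = "lpoly fract"

text \<open>Model of R(T) = Z[e^{+-a_1},...,e^{+-a_n}]/(e^{a_1+...+a_n}-1): the Laurent
  polynomial ring in X_1,...,X_{n-1}, where e^{a_k} = X_k for 1 <= k < n and
  e^{a_n} = (X_1 ... X_{n-1})^{-1}.  (This is the normal form of the quotient.)
  ev n i is the exponent vector of e^{a_i}, for 1 <= i <= n.\<close>

definition ev :: "nat \<Rightarrow> nat \<Rightarrow> lexp" where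
  "ev n i = (if i < n then Poly_Mapping.single i 1
             else - (\<Sum>k\<in>{1..<n}. Poly_Mapping.single k 1))"

definition RT :: "nat \<Rightarrow> lpoly set" where
  "RT n = {f. \<forall>e\<in>Poly_Mapping.keys f. \<forall>k. k \<notin> {1..<n} \<longrightarrow> Poly_Mapping.lookup e k = 0}"

text \<open>Frac(R(T)), as a subfield of the fraction field of all Laurent polynomials.\<close>
definition KT :: "nat \<Rightarrow> coeff set" where
  "KT n = {Fract a b | a b. a \<in> RT n \<and> b \<in> RT n \<and> b \<noteq> 0}"

definition ea :: "nat \<Rightarrow> nat \<Rightarrow> coeff" where
  "ea n i = Fract (Poly_Mapping.single (ev n i) 1) 1"

definition idx :: "nat \<Rightarrow> int \<Rightarrow> nat" where
  "idx n k = nat ((k - 1) mod int n) + 1"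

definition bb :: "nat \<Rightarrow> nat \<Rightarrow> coeff" where
  "bb n i = 1 - inverse (ea n (idx n (int i)))"

text \<open>The coefficient automorphism induced by a permutation p of {1..n} of the a_s:
  e^{a_k} is sent to e^{a_{p k}}.  It is the substitution of Laurent monomials,
  extended to fractions.\<close>

definition mimg :: "nat \<Rightarrow> (nat \<Rightarrow> nat) \<Rightarrow> lexp \<Rightarrow> lexp" where
  "mimg n p e = frag_extend (\<lambda>k. if 1 \<le> k \<and> k < n then ev n (p k) else Poly_Mapping.single k 1) e"

definition lsub :: "nat \<Rightarrow> (nat \<Rightarrow> nat) \<Rightarrow> lpoly \<Rightarrow> lpoly" where
  "lsub n p f = frag_extend (\<lambda>e. Poly_Mapping.single (mimg n p e) 1) f"

definition csub :: "nat \<Rightarrow> (nat \<Rightarrow> nat) \<Rightarrow> coeff \<Rightarrow> coeff" where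
  "csub n p q = (SOME r. \<exists>a b. b \<noteq> 0 \<and> q = Fract a b \<and> r = Fract (lsub n p a) (lsub n p b))"

definition swp :: "nat \<Rightarrow> nat \<Rightarrow> nat \<Rightarrow> nat" where
  "swp a b s = (if s = a then b else if s = b then a else s)"

text \<open>A formal power series is its coefficient function on monomials (finitely
  supported exponent vectors of the y-variables).\<close>
type_synonym 'k ps = "(nat \<Rightarrow>\<^sub>0 nat) \<Rightarrow> 'k"

definition psone :: "'k::comm_ring_1 ps" where
  "psone m = (if m = 0 then 1 else 0)"

definition psmult :: "'k::comm_ring_1 ps \<Rightarrow> 'k ps \<Rightarrow> 'k ps" where
  "psmult f g m = (\<Sum>q\<in>{q. fst q + snd q = m}. f (fst q) * g (snd q))"

definition permute_mono :: "(nat \<Rightarrow> nat) \<Rightarrow> (nat \<Rightarrow>\<^sub>0 nat) \<Rightarrow> (nat \<Rightarrow>\<^sub>0 nat)" where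
  "permute_mono \<pi> m = Abs_poly_mapping (\<lambda>i. Poly_Mapping.lookup m (\<pi> i))"

definition symmetric_ps :: "'k ps \<Rightarrow> bool" where
  "symmetric_ps f \<longleftrightarrow> (\<forall>\<pi> m. bij \<pi> \<longrightarrow> f (permute_mono \<pi> m) = f m)"

definition Lhat :: "nat \<Rightarrow> coeff ps set" where
  "Lhat n = {f. symmetric_ps f \<and> (\<forall>m. f m \<in> KT n)}"

text \<open>Omega(b|y) = prod_j (1 - b y_j)^{-1} = sum over all monomials m of b^{deg m} y^m.\<close>
definition Omega :: "'k::comm_ring_1 \<Rightarrow> 'k ps" where
  "Omega b m = b ^ (\<Sum>k\<in>Poly_Mapping.keys m. Poly_Mapping.lookup m k)"

text \<open>Omega(b|y)^{-1} = prod_j (1 - b y_j): sum over squarefree monomials of (-b)^{deg m} y^m.\<close>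
definition OmegaInv :: "'k::comm_ring_1 \<Rightarrow> 'k ps" where
  "OmegaInv b m = (if (\<forall>k. Poly_Mapping.lookup m k \<le> 1) then (- b) ^ card (Poly_Mapping.keys m) else 0)"

definition cmap :: "('k \<Rightarrow> 'k) \<Rightarrow> 'k ps \<Rightarrow> 'k ps" where
  "cmap \<sigma> f = (\<lambda>m. \<sigma> (f m))"

text \<open>s_i (1 <= i <= n-1) and s_theta act on coefficients; s_0 f = Omega(b_1)/Omega(b_n) s_theta f.\<close>
definition sop :: "nat \<Rightarrow> nat \<Rightarrow> coeff ps \<Rightarrow> coeff ps" where
  "sop n i f = (if i = 0
     then psmult (psmult (Omega (bb n 1)) (OmegaInv (bb n n))) (cmap (csub n (swp 1 n)) f)
     else cmap (csub n (swp i (i + 1))) f)"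

definition ealpha :: "nat \<Rightarrow> nat \<Rightarrow> coeff" where
  "ealpha n i = (if i = 0 then ea n n / ea n 1 else ea n i / ea n (i + 1))"

definition Dop :: "nat \<Rightarrow> nat \<Rightarrow> coeff ps \<Rightarrow> coeff ps" where
  "Dop n i f = (\<lambda>m. f m + inverse (1 - ealpha n i) * (sop n i f m - f m))"

definition omg :: "nat \<Rightarrow> coeff ps \<Rightarrow> coeff ps" where
  "omg n f = cmap (csub n (\<lambda>s. idx n (int s + 1))) f"

definition omg_inv :: "nat \<Rightarrow> coeff ps \<Rightarrow> coeff ps" where
  "omg_inv n f = cmap (csub n (\<lambda>s. idx n (int s - 1))) f"

definition rho :: "nat \<Rightarrow> nat \<Rightarrow> coeff ps" where
  "rho n j = foldr psmult (map (\<lambda>s. OmegaInv (bb n s)) [n - j + 1..<n + 1]) psone"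

end

theory Submission
  imports Defs
begin

text \<open>
  Conjugation by omega^j only rotates the indices of the a_s, so omega^{-j} D_{i+j} omega^j is again
  an operator f \<mapsto> f + (1 - e^{alpha_i})^{-1} (T f - f), where T is s_i acting on coefficients,
  followed by multiplication with Omega(b_{i+1}|y)/Omega(b_i|y) exactly when i + j = n.  Such an
  operator commutes with multiplication by rho_j as soon as s_i (rho_j g) = rho_j (T g).  Now s_i
  either maps the index set {n-j+1..n} of rho_j to itself, or moves one index across its boundary;
  the latter happens precisely when s_i or T carries an Omega-ratio, and Omega(b|y) Omega(b|y)^{-1} = 1
  makes both sides agree.
\<close>

section \<open>Products of formal power series\<close>

definition splits :: "(nat \<Rightarrow>\<^sub>0 nat) \<Rightarrow> ((nat \<Rightarrow>\<^sub>0 nat) \<times> (nat \<Rightarrow>\<^sub>0 nat)) set" where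
  "splits m = {q. fst q + snd q = m}"

lemma psmult_splits: "psmult f g m = (\<Sum>q\<in>splits m. f (fst q) * g (snd q))"
  by (simp add: psmult_def splits_def)

lemma finite_pointwise_le:
  "finite {a :: nat \<Rightarrow>\<^sub>0 nat. \<forall>k. Poly_Mapping.lookup a k \<le> Poly_Mapping.lookup m k}"
  (is "finite ?S")
proof -
  let ?M = "Max (Poly_Mapping.lookup m ` Poly_Mapping.keys m)"
  let ?F = "{h. \<forall>k. (k \<in> Poly_Mapping.keys m \<longrightarrow> h k \<in> {0..?M})
                   \<and> (k \<notin> Poly_Mapping.keys m \<longrightarrow> h k = (0::nat))}"
  have "Poly_Mapping.lookup ` ?S \<subseteq> ?F"
  proof clarify
    fix a k assume a: "\<forall>k. Poly_Mapping.lookup a k \<le> Poly_Mapping.lookup m k"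
    show "(k \<in> Poly_Mapping.keys m \<longrightarrow> Poly_Mapping.lookup a k \<in> {0..?M})
        \<and> (k \<notin> Poly_Mapping.keys m \<longrightarrow> Poly_Mapping.lookup a k = 0)"
    proof (intro conjI impI)
      assume "k \<in> Poly_Mapping.keys m"
      then have "Poly_Mapping.lookup m k \<le> ?M" by (intro Max_ge) auto
      then show "Poly_Mapping.lookup a k \<in> {0..?M}" using a[rule_format, of k] by simp
    next
      assume "k \<notin> Poly_Mapping.keys m"
      then show "Poly_Mapping.lookup a k = 0" using a[rule_format, of k] by (simp add: in_keys_iff)
    qed
  qed
  moreover have "finite ?F"
    by (rule finite_set_of_finite_funs) auto
  ultimately have "finite (Poly_Mapping.lookup ` ?S)"
    by (rule finite_subset)
  then show ?thesis
    by (rule finite_imageD) (simp add: inj_on_def poly_mapping_eqI)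
qed

lemma finite_splits: "finite (splits m)"
proof (rule finite_subset)
  let ?S = "{a :: nat \<Rightarrow>\<^sub>0 nat. \<forall>k. Poly_Mapping.lookup a k \<le> Poly_Mapping.lookup m k}"
  show "splits m \<subseteq> ?S \<times> ?S"
    by (auto simp: splits_def lookup_add)
  show "finite (?S \<times> ?S)"
    using finite_pointwise_le by blast
qed

lemma psmult_commute: "psmult f g = psmult g f"
proof
  fix m
  show "psmult f g m = psmult g f m"
    unfolding psmult_splits
    by (rule sum.reindex_bij_witness[of _ prod.swap prod.swap])
       (auto simp: splits_def add.commute mult.commute)
qed

lemma psone_psmult: "psmult psone g = g"
proof
  fix m
  have "psmult psone g m = (\<Sum>q\<in>splits m. if q = (0, m) then g m else 0)"
    unfolding psmult_splits by (rule sum.cong) (auto simp: psone_def splits_def)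
  also have "\<dots> = g m"
    using finite_splits by (simp add: splits_def)
  finally show "psmult psone g m = g m" .
qed

lemma psmult_assoc: "psmult (psmult f g) h = psmult f (psmult g h)"
proof
  fix m
  let ?L = "Sigma (splits m) (\<lambda>q. splits (fst q))"
  let ?R = "Sigma (splits m) (\<lambda>q. splits (snd q))"
  have "psmult (psmult f g) h m = (\<Sum>(q, r)\<in>?L. f (fst r) * g (snd r) * h (snd q))"
    by (simp add: psmult_splits sum_distrib_right sum.Sigma finite_splits)
  also have "\<dots> = (\<Sum>(q, r)\<in>?R. f (fst q) * (g (fst r) * h (snd r)))"
    by (rule sum.reindex_bij_witness[of _
          "\<lambda>((a, bc), (b, c)). ((a + b, c), (a, b))" "\<lambda>((ab, c), (a, b)). ((a, b + c), (b, c))"])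
       (auto simp: splits_def add.assoc mult.assoc)
  also have "\<dots> = psmult f (psmult g h) m"
    by (simp add: psmult_splits sum_distrib_left sum.Sigma finite_splits)
  finally show "psmult (psmult f g) h m = psmult f (psmult g h) m" .
qed

interpretation ps: comm_monoid "psmult :: 'k::comm_ring_1 ps \<Rightarrow> 'k ps \<Rightarrow> 'k ps" psone
proof
  fix a b c :: "'k ps"
  show "psmult (psmult a b) c = psmult a (psmult b c)" by (rule psmult_assoc)
  show "psmult a b = psmult b a" by (rule psmult_commute)
  show "psmult a psone = a" by (simp add: psmult_commute[of a] psone_psmult)
qed

interpretation ps: comm_monoid_set "psmult :: 'k::comm_ring_1 ps \<Rightarrow> 'k ps \<Rightarrow> 'k ps" psone
  ..

lemma foldr_psmult: "distinct xs \<Longrightarrow> foldr psmult (map g xs) psone = ps.F g (set xs)"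
  by (induction xs) (simp_all add: ps.insert)

definition mdeg :: "(nat \<Rightarrow>\<^sub>0 nat) \<Rightarrow> nat" where
  "mdeg m = (\<Sum>k\<in>Poly_Mapping.keys m. Poly_Mapping.lookup m k)"

lemma mdeg_eq_sum: "finite K \<Longrightarrow> Poly_Mapping.keys m \<subseteq> K \<Longrightarrow> mdeg m = (\<Sum>k\<in>K. Poly_Mapping.lookup m k)"
  unfolding mdeg_def by (rule sum.mono_neutral_left) (auto simp: in_keys_iff)

lemma mdeg_add: "mdeg (a + c) = mdeg a + mdeg c"
proof -
  let ?K = "Poly_Mapping.keys a \<union> Poly_Mapping.keys c"
  have K: "finite ?K" by simp
  have "mdeg (a + c) = (\<Sum>k\<in>?K. Poly_Mapping.lookup (a + c) k)"
    by (rule mdeg_eq_sum[OF K]) (rule keys_add)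
  also have "\<dots> = mdeg a + mdeg c"
    by (simp add: lookup_add sum.distrib mdeg_eq_sum[OF K])
  finally show ?thesis .
qed

definition squarefree_mono :: "(nat \<Rightarrow>\<^sub>0 nat) \<Rightarrow> bool" where
  "squarefree_mono c \<longleftrightarrow> (\<forall>k. Poly_Mapping.lookup c k \<le> 1)"

lemma mdeg_squarefree:
  assumes "squarefree_mono c" shows "mdeg c = card (Poly_Mapping.keys c)"
  unfolding mdeg_def card_eq_sum
proof (rule sum.cong[OF refl])
  fix k assume "k \<in> Poly_Mapping.keys c"
  then show "Poly_Mapping.lookup c k = 1"
    using assms[unfolded squarefree_mono_def, rule_format, of k] by (simp add: in_keys_iff)
qed

definition indicator_mono :: "nat set \<Rightarrow> (nat \<Rightarrow>\<^sub>0 nat)" where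
  "indicator_mono T = Abs_poly_mapping (\<lambda>k. if k \<in> T then 1 else 0)"

lemma lookup_indicator_mono:
  "finite T \<Longrightarrow> Poly_Mapping.lookup (indicator_mono T) k = (if k \<in> T then 1 else 0)"
  by (simp add: indicator_mono_def)

lemma keys_indicator_mono: "finite T \<Longrightarrow> Poly_Mapping.keys (indicator_mono T) = T"
  by (auto simp: in_keys_iff lookup_indicator_mono split: if_splits)

lemma indicator_mono_keys: "squarefree_mono c \<Longrightarrow> indicator_mono (Poly_Mapping.keys c) = c"
proof (rule poly_mapping_eqI)
  fix k assume "squarefree_mono c"
  then have "Poly_Mapping.lookup c k \<le> 1" by (simp add: squarefree_mono_def)
  then show "Poly_Mapping.lookup (indicator_mono (Poly_Mapping.keys c)) k = Poly_Mapping.lookup c k"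
    by (auto simp: lookup_indicator_mono in_keys_iff)
qed

lemma bij_betw_squarefree_splits:
  "bij_betw (\<lambda>q. Poly_Mapping.keys (snd q))
     {q \<in> splits m. squarefree_mono (snd q)} (Pow (Poly_Mapping.keys m))"
proof (rule bij_betw_byWitness[where f' = "\<lambda>T. (m - indicator_mono T, indicator_mono T)"])
  show "\<forall>q\<in>{q \<in> splits m. squarefree_mono (snd q)}.
      (m - indicator_mono (Poly_Mapping.keys (snd q)), indicator_mono (Poly_Mapping.keys (snd q))) = q"
  proof
    fix q assume "q \<in> {q \<in> splits m. squarefree_mono (snd q)}"
    then have "fst q + snd q = m" "squarefree_mono (snd q)"
      by (auto simp: splits_def)
    then show "(m - indicator_mono (Poly_Mapping.keys (snd q)), indicator_mono (Poly_Mapping.keys (snd q))) = q"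
      by (metis add_diff_cancel_right' indicator_mono_keys prod.collapse)
  qed
  show "(\<lambda>q. Poly_Mapping.keys (snd q)) ` {q \<in> splits m. squarefree_mono (snd q)}
      \<subseteq> Pow (Poly_Mapping.keys m)"
    by (auto simp: splits_def in_keys_iff lookup_add)
  show "\<forall>T\<in>Pow (Poly_Mapping.keys m). Poly_Mapping.keys (snd (m - indicator_mono T, indicator_mono T)) = T"
  proof
    fix T assume "T \<in> Pow (Poly_Mapping.keys m)"
    then have "finite T"
      by (simp add: finite_subset)
    then show "Poly_Mapping.keys (snd (m - indicator_mono T, indicator_mono T)) = T"
      by (simp add: keys_indicator_mono)
  qed
  show "(\<lambda>T. (m - indicator_mono T, indicator_mono T)) ` Pow (Poly_Mapping.keys m)
      \<subseteq> {q \<in> splits m. squarefree_mono (snd q)}"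
  proof (rule image_subsetI)
    fix T assume T: "T \<in> Pow (Poly_Mapping.keys m)"
    then have fin: "finite T"
      by (simp add: finite_subset)
    have "m - indicator_mono T + indicator_mono T = m"
      using T by (intro poly_mapping_eqI) (auto simp: lookup_add lookup_minus lookup_indicator_mono[OF fin] in_keys_iff)
    then show "(m - indicator_mono T, indicator_mono T) \<in> {q \<in> splits m. squarefree_mono (snd q)}"
      by (simp add: splits_def squarefree_mono_def lookup_indicator_mono[OF fin])
  qed
qed

lemma sum_Pow_minus_one_power:
  "finite K \<Longrightarrow> (\<Sum>T\<in>Pow K. (-1::'a::comm_ring_1) ^ card T) = (if K = {} then 1 else 0)"
  using prod_diff_conv_sum[of K "\<lambda>_. 1::'a" "\<lambda>_. 1"] by (simp add: power_0_left)

lemma OmegaInv_squarefree: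
  "OmegaInv b c = (if squarefree_mono c then (- b) ^ card (Poly_Mapping.keys c) else 0)"
  by (simp add: OmegaInv_def squarefree_mono_def)

lemma Omega_OmegaInv_squarefree_split:
  assumes "squarefree_mono c"
  shows "Omega b a * OmegaInv b c = (-1) ^ card (Poly_Mapping.keys c) * b ^ mdeg (a + c)"
proof -
  have "Omega b a = b ^ mdeg a"
    by (simp add: Omega_def mdeg_def)
  moreover have "OmegaInv b c = (-1) ^ card (Poly_Mapping.keys c) * b ^ mdeg c"
    using assms by (simp add: OmegaInv_squarefree mdeg_squarefree power_minus[of b])
  ultimately show ?thesis
    unfolding mdeg_add power_add by (simp only: mult_ac)
qed

lemma Omega_psmult_OmegaInv: "psmult (Omega b) (OmegaInv b) = (psone :: 'k::comm_ring_1 ps)"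
proof
  fix m :: "nat \<Rightarrow>\<^sub>0 nat"
  let ?Q = "{q \<in> splits m. squarefree_mono (snd q)}"
  have "psmult (Omega b) (OmegaInv b) m = (\<Sum>q\<in>?Q. Omega b (fst q) * OmegaInv b (snd q))"
    unfolding psmult_splits
  proof (rule sum.mono_neutral_right)
    show "\<forall>q\<in>splits m - ?Q. Omega b (fst q) * OmegaInv b (snd q) = 0"
    proof
      fix q assume "q \<in> splits m - ?Q"
      then have "\<not> squarefree_mono (snd q)" by blast
      then show "Omega b (fst q) * OmegaInv b (snd q) = 0"
        by (simp add: OmegaInv_squarefree)
    qed
  qed (simp_all add: finite_splits)
  also have "\<dots> = (\<Sum>q\<in>?Q. (-1) ^ card (Poly_Mapping.keys (snd q)) * b ^ mdeg m)"
    by (rule sum.cong) (auto simp: splits_def Omega_OmegaInv_squarefree_split)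
  also have "\<dots> = (\<Sum>q\<in>?Q. (-1) ^ card (Poly_Mapping.keys (snd q))) * b ^ mdeg m"
    by (rule sum_distrib_right[symmetric])
  also have "(\<Sum>q\<in>?Q. (-1) ^ card (Poly_Mapping.keys (snd q))) = (\<Sum>T\<in>Pow (Poly_Mapping.keys m). (-1) ^ card T)"
    by (rule sum.reindex_bij_betw[OF bij_betw_squarefree_splits])
  also have "\<dots> * b ^ mdeg m = psone m"
  proof (cases "m = 0")
    case True
    then show ?thesis by (simp add: psone_def mdeg_def)
  next
    case False
    then show ?thesis by (simp add: psone_def sum_Pow_minus_one_power)
  qed
  finally show "psmult (Omega b) (OmegaInv b) m = psone m" .
qed

lemma Omega_ratio_psmult_inverse:
  "psmult (psmult (Omega a) (OmegaInv b)) (psmult (Omega b) (OmegaInv a)) = (psone :: 'k::comm_ring_1 ps)"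
proof -
  have "psmult (psmult (Omega a) (OmegaInv b)) (psmult (Omega b) (OmegaInv a))
      = psmult (psmult (Omega a) (OmegaInv a)) (psmult (Omega b) (OmegaInv b))"
    by (simp only: ps.assoc ps.commute ps.left_commute)
  then show ?thesis
    by (simp add: Omega_psmult_OmegaInv psone_psmult)
qed

definition demazure :: "'k::comm_ring_1 \<Rightarrow> ('k ps \<Rightarrow> 'k ps) \<Rightarrow> 'k ps \<Rightarrow> 'k ps" where
  "demazure c T f = (\<lambda>m. f m + c * (T f m - f m))"

lemma psmult_demazure:
  assumes "T (psmult r f) = psmult r (T' f)"
  shows "demazure c T (psmult r f) = psmult r (demazure c T' f)"
proof
  fix m
  have "psmult r (demazure c T' f) m = psmult r f m + c * (psmult r (T' f) m - psmult r f m)"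
    by (simp add: psmult_splits demazure_def algebra_simps sum.distrib sum_distrib_left sum_subtractf)
  then show "demazure c T (psmult r f) m = psmult r (demazure c T' f) m"
    by (simp add: demazure_def assms)
qed

section \<open>Coefficient endomorphisms\<close>

locale ring_endo =
  fixes \<sigma> :: "'k::comm_ring_1 \<Rightarrow> 'k"
  assumes add: "\<sigma> (x + y) = \<sigma> x + \<sigma> y"
    and mult: "\<sigma> (x * y) = \<sigma> x * \<sigma> y"
    and one: "\<sigma> 1 = 1"
begin

lemma zero: "\<sigma> 0 = 0"
  using add[of 0 0] by simp

lemma minus: "\<sigma> (- x) = - \<sigma> x"
  using add[of x "- x"] by (simp add: zero add.commute eq_neg_iff_add_eq_0)

lemma diff: "\<sigma> (x - y) = \<sigma> x - \<sigma> y"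
  by (simp only: diff_conv_add_uminus add minus)

lemma sum: "\<sigma> (sum g A) = (\<Sum>x\<in>A. \<sigma> (g x))"
  by (induction A rule: infinite_finite_induct) (simp_all add: zero add)

lemma power: "\<sigma> (x ^ k) = \<sigma> x ^ k"
  by (induction k) (simp_all add: one mult)

lemma cmap_psmult: "cmap \<sigma> (psmult f g) = psmult (cmap \<sigma> f) (cmap \<sigma> g)"
  by (simp add: fun_eq_iff cmap_def psmult_def sum mult)

lemma cmap_psone: "cmap \<sigma> psone = psone"
  by (simp add: fun_eq_iff cmap_def psone_def zero one)

lemma cmap_Omega: "cmap \<sigma> (Omega b) = Omega (\<sigma> b)"
  by (simp add: fun_eq_iff cmap_def Omega_def power)

lemma cmap_OmegaInv: "cmap \<sigma> (OmegaInv b) = OmegaInv (\<sigma> b)"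
  by (simp add: fun_eq_iff cmap_def OmegaInv_def power minus zero)

lemma cmap_ps_prod: "cmap \<sigma> (ps.F g A) = ps.F (\<lambda>x. cmap \<sigma> (g x)) A"
  by (induction A rule: infinite_finite_induct) (simp_all add: cmap_psone cmap_psmult)

end

lemma (in ring_endo) cmap_demazure:
  assumes "\<And>x. \<sigma> (\<tau> x) = x"
  shows "cmap \<sigma> (demazure c T (cmap \<tau> g)) = demazure (\<sigma> c) (\<lambda>h. cmap \<sigma> (T (cmap \<tau> h))) g"
  by (simp add: fun_eq_iff cmap_def demazure_def add mult diff assms)

lemma ring_endo_inverse:
  fixes \<sigma> :: "'k::field \<Rightarrow> 'k"
  assumes "ring_endo \<sigma>" shows "\<sigma> (inverse x) = inverse (\<sigma> x)"
proof (cases "x = 0")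
  case True
  then show ?thesis using ring_endo.zero[OF assms] by simp
next
  case False
  then have "\<sigma> x * \<sigma> (inverse x) = 1"
    by (simp flip: ring_endo.mult[OF assms] add: ring_endo.one[OF assms])
  then show ?thesis by (rule inverse_unique[symmetric])
qed

lemma ring_endo_divide:
  fixes \<sigma> :: "'k::field \<Rightarrow> 'k"
  assumes "ring_endo \<sigma>" shows "\<sigma> (x / y) = \<sigma> x / \<sigma> y"
  using assms by (simp add: divide_inverse ring_endo.mult ring_endo_inverse)

section \<open>Indices modulo n\<close>

lemma int_idx: "0 < n \<Longrightarrow> int (idx n k) = (k - 1) mod int n + 1"
  by (simp add: idx_def)

lemma idx_in:
  assumes "0 < n" shows "idx n k \<in> {1..n}"
proof -
  have "0 \<le> (k - 1) mod int n" "(k - 1) mod int n < int n"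
    using assms by simp_all
  then show ?thesis by (auto simp: idx_def)
qed

lemma idx_of_nat: "s \<in> {1..n} \<Longrightarrow> idx n (int s) = s"
  by (auto simp: idx_def)

lemma idx_eq_iff:
  assumes "0 < n" shows "idx n k = idx n k' \<longleftrightarrow> k mod int n = k' mod int n"
proof -
  have "idx n k = idx n k' \<longleftrightarrow> int (idx n k) = int (idx n k')"
    by simp
  also have "\<dots> \<longleftrightarrow> (k - 1) mod int n = (k' - 1) mod int n"
    by (simp add: int_idx[OF assms])
  also have "\<dots> \<longleftrightarrow> k mod int n = k' mod int n"
    by (simp add: mod_eq_dvd_iff)
  finally show ?thesis .
qed

lemma int_idx_mod: "0 < n \<Longrightarrow> int (idx n k) mod int n = k mod int n"
  by (simp add: int_idx mod_add_left_eq)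

lemma idx_zero: "0 < n \<Longrightarrow> idx n 0 = n"
  by (simp add: idx_def zmod_minus1)

lemma idx_of_less: "x < n \<Longrightarrow> idx n (int x) = (if x = 0 then n else x)"
  by (simp add: idx_zero idx_of_nat)

lemma idx_Suc_of_less: "x < n \<Longrightarrow> idx n (int x + 1) = x + 1"
  using idx_of_nat[of "x + 1" n] by (simp add: add.commute)

lemma mod_add_mod_minus: "(int ((i + j) mod n) + - int j) mod int n = int i mod int n"
  by (metis add_diff_cancel_right' mod_diff_left_eq of_nat_add of_nat_mod diff_conv_add_uminus)

definition idx_perm :: "nat \<Rightarrow> (nat \<Rightarrow> nat) \<Rightarrow> bool" where
  "idx_perm n p \<longleftrightarrow> bij_betw p {1..n} {1..n}"

lemma idx_perm_id: "idx_perm n id"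
  by (simp add: idx_perm_def)

lemma idx_perm_comp: "idx_perm n p \<Longrightarrow> idx_perm n q \<Longrightarrow> idx_perm n (p \<circ> q)"
  unfolding idx_perm_def by (rule bij_betw_trans)

lemma idx_perm_in: "idx_perm n p \<Longrightarrow> s \<in> {1..n} \<Longrightarrow> p s \<in> {1..n}"
  unfolding idx_perm_def using bij_betwE by blast

lemma idx_perm_inverse:
  assumes "idx_perm n p"
  obtains p' where "idx_perm n p'" "\<And>s. s \<in> {1..n} \<Longrightarrow> p' (p s) = s"
proof
  show "idx_perm n (inv_into {1..n} p)"
    using assms unfolding idx_perm_def by (rule bij_betw_inv_into)
  show "\<And>s. s \<in> {1..n} \<Longrightarrow> inv_into {1..n} p (p s) = s"
    using assms unfolding idx_perm_def by (simp add: bij_betw_inv_into_left)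
qed

definition rot :: "nat \<Rightarrow> int \<Rightarrow> nat \<Rightarrow> nat" where
  "rot n c s = idx n (int s + c)"

lemma rot_idx: "0 < n \<Longrightarrow> rot n c (idx n x) = idx n (x + c)"
  by (simp add: rot_def idx_eq_iff int_idx_mod mod_add_left_eq[of "int (idx n x)", symmetric]
      mod_add_left_eq[of x, symmetric])

lemma rot_rot: "0 < n \<Longrightarrow> rot n c (rot n d s) = rot n (d + c) s"
  by (simp add: rot_def[of n d] rot_idx) (simp add: rot_def add.assoc)

lemma rot_zero: "s \<in> {1..n} \<Longrightarrow> rot n 0 s = s"
  by (simp add: rot_def idx_of_nat)

lemma idx_perm_rot:
  assumes "0 < n" shows "idx_perm n (rot n c)"
  unfolding idx_perm_def
proof (rule bij_betw_byWitness[where f' = "rot n (- c)"])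
  show "\<forall>s\<in>{1..n}. rot n (- c) (rot n c s) = s" "\<forall>s\<in>{1..n}. rot n c (rot n (- c) s) = s"
    using assms by (simp_all add: rot_rot rot_zero)
  show "rot n c ` {1..n} \<subseteq> {1..n}" "rot n (- c) ` {1..n} \<subseteq> {1..n}"
    unfolding rot_def using idx_in[OF assms] by blast+
qed

lemma swp_commute: "swp a b = swp b a"
  by (simp add: fun_eq_iff swp_def)

lemma swp_swp: "swp a b (swp a b s) = s"
  by (simp add: swp_def)

lemma idx_perm_swp: "a \<in> {1..n} \<Longrightarrow> b \<in> {1..n} \<Longrightarrow> idx_perm n (swp a b)"
  unfolding idx_perm_def
  by (rule bij_betw_byWitness[where f' = "swp a b"]) (auto simp: swp_swp swp_def)

lemma swp_image_eq: "(a \<in> S \<longleftrightarrow> b \<in> S) \<Longrightarrow> swp a b ` S = S"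
  by (auto simp: swp_def image_iff)

lemma swp_image: "a \<notin> S \<Longrightarrow> b \<in> S \<Longrightarrow> swp a b ` S = insert a (S - {b})"
  by (auto simp: swp_def image_iff)

lemma swp_conj: "inj_on p A \<Longrightarrow> a \<in> A \<Longrightarrow> b \<in> A \<Longrightarrow> s \<in> A \<Longrightarrow> p (swp a b s) = swp (p a) (p b) (p s)"
  by (auto simp: swp_def dest: inj_onD)

text \<open>The reflection s_x exchanges a_x and a_{x+1}, indices read mod n; thus sref n 0 exchanges
  a_n and a_1, which is s_theta.\<close>
definition sref :: "nat \<Rightarrow> int \<Rightarrow> nat \<Rightarrow> nat" where
  "sref n x = swp (idx n x) (idx n (x + 1))"

lemma sref_cong:
  assumes n: "0 < n" and xy: "x mod int n = y mod int n"
  shows "sref n x = sref n y"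
proof -
  have "(x + 1) mod int n = (y + 1) mod int n"
    using xy by (metis mod_add_left_eq)
  then have "idx n x = idx n y" "idx n (x + 1) = idx n (y + 1)"
    using xy by (simp_all add: idx_eq_iff[OF n])
  then show ?thesis
    by (simp add: sref_def)
qed

lemma idx_perm_sref: "0 < n \<Longrightarrow> idx_perm n (sref n x)"
  unfolding sref_def by (intro idx_perm_swp idx_in)

lemma rot_sref:
  assumes n: "0 < n" and s: "s \<in> {1..n}"
  shows "rot n c (sref n x (rot n (- c) s)) = sref n (x + c) s"
proof -
  have inj: "inj_on (rot n c) {1..n}"
    using idx_perm_rot[OF n, of c] unfolding idx_perm_def by (rule bij_betw_imp_inj_on)
  have "rot n (- c) s \<in> {1..n}"
    unfolding rot_def by (rule idx_in[OF n])
  then have "rot n c (sref n x (rot n (- c) s))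
      = swp (rot n c (idx n x)) (rot n c (idx n (x + 1))) (rot n c (rot n (- c) s))"
    unfolding sref_def by (rule swp_conj[OF inj idx_in[OF n] idx_in[OF n]])
  then show ?thesis
    using n s by (simp add: rot_idx rot_rot rot_zero sref_def ac_simps)
qed

section \<open>Permuting the variables a_1, ..., a_n\<close>

lemma ev_less: "s < n \<Longrightarrow> ev n s = frag_of s"
  by (simp add: ev_def)

text \<open>The exponent vectors of e^{a_1}, ..., e^{a_n} sum to zero, mirroring e^{a_1 + ... + a_n} = 1.\<close>
lemma sum_ev: "1 \<le> n \<Longrightarrow> (\<Sum>s\<in>{1..n}. ev n s) = 0"
proof -
  assume "1 \<le> n"
  then have "{1..n} = insert n {1..<n}" by auto
  then have "(\<Sum>s\<in>{1..n}. ev n s) = ev n n + (\<Sum>s\<in>{1..<n}. ev n s)" by simp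
  also have "(\<Sum>s\<in>{1..<n}. ev n s) = (\<Sum>s\<in>{1..<n}. frag_of s)"
    by (rule sum.cong) (auto simp: ev_less)
  finally show ?thesis by (simp add: ev_def)
qed

lemma mimg_frag_of: "mimg n p (frag_of k) = (if 1 \<le> k \<and> k < n then ev n (p k) else frag_of k)"
  by (simp add: mimg_def)

lemma mimg_0 [simp]: "mimg n p 0 = 0"
  by (simp add: mimg_def)

lemma mimg_add: "mimg n p (a + b) = mimg n p a + mimg n p b"
  by (simp add: mimg_def frag_extend_add)

lemma mimg_diff: "mimg n p (a - b) = mimg n p a - mimg n p b"
  by (simp add: mimg_def frag_extend_diff)

lemma mimg_ev:
  assumes p: "idx_perm n p" and s: "s \<in> {1..n}"
  shows "mimg n p (ev n s) = ev n (p s)"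
proof (cases "s < n")
  case True
  then show ?thesis using s by (simp add: ev_less mimg_frag_of)
next
  case False
  then have sn: "s = n" and n: "1 \<le> n" using s by auto
  have "(\<Sum>k\<in>{1..n}. ev n (p k)) = 0"
    using sum.reindex_bij_betw[OF p[unfolded idx_perm_def], of "ev n"] sum_ev[OF n] by simp
  moreover have "{1..n} = insert n {1..<n}" using n by auto
  ultimately have "ev n (p n) = - (\<Sum>k\<in>{1..<n}. ev n (p k))"
    by (simp add: eq_neg_iff_add_eq_0)
  then show ?thesis
    by (simp add: sn ev_def mimg_def frag_extend_minus frag_extend_sum)
qed

lemma mimg_comp:
  assumes p: "idx_perm n p" and q: "idx_perm n q"
  shows "mimg n p (mimg n q e) = mimg n (p \<circ> q) e"
  using subset_UNIV
proof (induction e rule: frag_induction)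
  case (one k)
  show ?case
  proof (cases "1 \<le> k \<and> k < n")
    case True
    then have "q k \<in> {1..n}" using idx_perm_in[OF q] by auto
    then show ?thesis using True by (simp add: mimg_frag_of mimg_ev[OF p])
  next
    case False
    then have "mimg n q (frag_of k) = frag_of k" "mimg n p (frag_of k) = frag_of k"
      "mimg n (p \<circ> q) (frag_of k) = frag_of k"
      by (auto simp: mimg_frag_of)
    then show ?thesis by (simp add: comp_def)
  qed
qed (simp_all add: mimg_diff)

lemma mimg_cong: "(\<And>s. s \<in> {1..<n} \<Longrightarrow> p s = q s) \<Longrightarrow> mimg n p = mimg n q"
  unfolding mimg_def by (intro ext frag_extend_eq) auto

lemma mimg_id: "(\<And>s. s \<in> {1..<n} \<Longrightarrow> p s = s) \<Longrightarrow> mimg n p e = e"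
  unfolding mimg_def
  by (subst (2) frag_expansion, rule frag_extend_eq) (auto simp: ev_less)

lemma lsub_eq_frag_extend: "lsub n p f = frag_extend (frag_of \<circ> mimg n p) f"
  by (simp add: lsub_def comp_def)

lemma lsub_frag_of: "lsub n p (frag_of e) = frag_of (mimg n p e)"
  by (simp add: lsub_def)

lemma lsub_add: "lsub n p (a + b) = lsub n p a + lsub n p b"
  by (simp add: lsub_def frag_extend_add)

lemma lsub_diff: "lsub n p (a - b) = lsub n p a - lsub n p b"
  by (simp add: lsub_def frag_extend_diff)

lemma lsub_one: "lsub n p 1 = 1"
  using lsub_frag_of[of n p 0] by simp

lemma lsub_mult: "lsub n p (a * b) = lsub n p a * lsub n p b"
  using subset_UNIV
proof (induction a rule: frag_induction)
  case (one x)
  show ?case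
    using subset_UNIV
  proof (induction b rule: frag_induction)
    case (one y)
    then show ?case
      by (simp add: lsub_frag_of mult_single mimg_add)
  next
    case (diff a b)
    then show ?case by (simp add: right_diff_distrib lsub_diff)
  qed (simp add: lsub_def)
next
  case (diff a b)
  then show ?case by (simp add: left_diff_distrib lsub_diff)
qed (simp add: lsub_def)

lemma lsub_comp:
  assumes "idx_perm n p" "idx_perm n q"
  shows "lsub n p (lsub n q f) = lsub n (p \<circ> q) f"
proof -
  have "lsub n p (lsub n q f) = frag_extend ((frag_of \<circ> mimg n p) \<circ> mimg n q) f"
    unfolding lsub_eq_frag_extend comp_assoc[symmetric] by (rule frag_extend_compose)
  also have "(frag_of \<circ> mimg n p) \<circ> mimg n q = frag_of \<circ> mimg n (p \<circ> q)"
    by (simp add: fun_eq_iff mimg_comp[OF assms])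
  finally show ?thesis by (simp add: lsub_eq_frag_extend comp_def)
qed

lemma lsub_id:
  assumes "\<And>s. s \<in> {1..<n} \<Longrightarrow> p s = s" shows "lsub n p f = f"
proof -
  have "frag_of \<circ> mimg n p = frag_of"
    using mimg_id[OF assms] by (simp add: fun_eq_iff)
  then show ?thesis by (simp add: lsub_eq_frag_extend flip: frag_expansion)
qed

lemma lsub_inj:
  assumes p: "idx_perm n p" and eq: "lsub n p a = lsub n p b"
  shows "a = b"
proof -
  obtain p' where p': "idx_perm n p'" "\<And>s. s \<in> {1..n} \<Longrightarrow> p' (p s) = s"
    using idx_perm_inverse[OF p] by blast
  have "lsub n (p' \<circ> p) x = x" for x
    by (rule lsub_id) (simp add: p'(2))
  then show ?thesis
    using eq by (metis lsub_comp[OF p'(1) p])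
qed

lemma lsub_nonzero: "idx_perm n p \<Longrightarrow> b \<noteq> 0 \<Longrightarrow> lsub n p b \<noteq> 0"
  using lsub_inj[of n p b 0] by (auto simp: lsub_def)

text \<open>csub_def picks an arbitrary representative of the fraction; since lsub is an injective
  ring map, the choice does not matter.\<close>
lemma csub_Fract:
  assumes p: "idx_perm n p" and b: "b \<noteq> 0"
  shows "csub n p (Fract a b) = Fract (lsub n p a) (lsub n p b)"
  unfolding csub_def
proof (rule someI2)
  show "\<exists>a' b'. b' \<noteq> 0 \<and> Fract a b = Fract a' b' \<and> Fract (lsub n p a) (lsub n p b) = Fract (lsub n p a') (lsub n p b')"
    using b by blast
next
  fix r assume "\<exists>a' b'. b' \<noteq> 0 \<and> Fract a b = Fract a' b' \<and> r = Fract (lsub n p a') (lsub n p b')"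
  then obtain a' b' where b': "b' \<noteq> 0" and eq: "Fract a b = Fract a' b'"
    and r: "r = Fract (lsub n p a') (lsub n p b')"
    by blast
  have "a * b' = a' * b"
    using eq b b' by (simp add: eq_fract)
  then have "lsub n p a * lsub n p b' = lsub n p a' * lsub n p b"
    by (simp flip: lsub_mult)
  then show "r = Fract (lsub n p a) (lsub n p b)"
    using r b b' lsub_nonzero[OF p] by (simp add: eq_fract)
qed

lemma ring_endo_csub:
  assumes p: "idx_perm n p" shows "ring_endo (csub n p)"
proof
  fix x y :: coeff
  obtain a b where x: "x = Fract a b" "b \<noteq> 0" by (cases x)
  obtain c d where y: "y = Fract c d" "d \<noteq> 0" by (cases y)
  have nz: "lsub n p b \<noteq> 0" "lsub n p d \<noteq> 0"
    using lsub_nonzero[OF p] x(2) y(2) by auto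
  show "csub n p (x + y) = csub n p x + csub n p y"
    using x y nz by (simp add: csub_Fract[OF p] lsub_add lsub_mult)
  show "csub n p (x * y) = csub n p x * csub n p y"
    using x y nz by (simp add: csub_Fract[OF p] lsub_mult)
  show "csub n p 1 = 1"
    using csub_Fract[OF p one_neq_zero, of 1] by (simp add: lsub_one One_fract_def)
qed

lemma csub_comp:
  assumes p: "idx_perm n p" and q: "idx_perm n q"
  shows "csub n p (csub n q x) = csub n (p \<circ> q) x"
proof -
  obtain a b where x: "x = Fract a b" "b \<noteq> 0" by (cases x)
  then show ?thesis
    by (simp add: csub_Fract p q idx_perm_comp lsub_nonzero lsub_comp)
qed

lemma csub_cong:
  assumes "\<And>s. s \<in> {1..<n} \<Longrightarrow> p s = q s" shows "csub n p = csub n q"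
proof -
  have "lsub n p = lsub n q"
    using mimg_cong[OF assms] by (simp add: fun_eq_iff lsub_def)
  then show ?thesis
    unfolding csub_def by (rule arg_cong)
qed

lemma csub_id: "(\<And>s. s \<in> {1..<n} \<Longrightarrow> p s = s) \<Longrightarrow> csub n p x = x"
proof -
  assume "\<And>s. s \<in> {1..<n} \<Longrightarrow> p s = s"
  then have "csub n p = csub n id" by (intro csub_cong) simp
  moreover obtain a b where "x = Fract a b" "b \<noteq> 0" by (cases x)
  ultimately show ?thesis
    by (simp add: csub_Fract idx_perm_id lsub_id)
qed

lemma csub_ea: "idx_perm n p \<Longrightarrow> s \<in> {1..n} \<Longrightarrow> csub n p (ea n s) = ea n (p s)"
  by (simp add: ea_def csub_Fract lsub_frag_of lsub_one mimg_ev)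

lemma csub_bb:
  assumes p: "idx_perm n p" and s: "s \<in> {1..n}"
  shows "csub n p (bb n s) = bb n (p s)"
  using idx_of_nat[OF s] idx_of_nat[OF idx_perm_in[OF p s]]
  by (simp add: bb_def ring_endo.diff[OF ring_endo_csub[OF p]] ring_endo.one[OF ring_endo_csub[OF p]]
      ring_endo_inverse[OF ring_endo_csub[OF p]] csub_ea[OF p s])

lemma csub_rot_rot: "0 < n \<Longrightarrow> csub n (rot n c) (csub n (rot n d) z) = csub n (rot n (d + c)) z"
  by (simp add: csub_comp idx_perm_rot comp_def rot_rot)

lemma csub_rot_zero: "csub n (rot n 0) z = z"
  by (rule csub_id) (simp add: rot_zero)

lemma cmap_csub_rot_funpow:
  assumes "0 < n" shows "(cmap (csub n (rot n c)) ^^ j) f = cmap (csub n (rot n (int j * c))) f"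
proof (induction j)
  case 0
  then show ?case by (simp add: cmap_def csub_rot_zero)
next
  case (Suc j)
  then show ?case by (simp add: cmap_def csub_rot_rot[OF assms] algebra_simps)
qed

lemma omg_funpow:
  assumes "0 < n" shows "(omg n ^^ j) f = cmap (csub n (rot n (int j))) f"
proof -
  have "omg n = cmap (csub n (rot n 1))"
    by (simp add: fun_eq_iff omg_def rot_def[abs_def])
  then show ?thesis
    using assms by (simp add: cmap_csub_rot_funpow)
qed

lemma omg_inv_funpow:
  assumes "0 < n" shows "(omg_inv n ^^ j) f = cmap (csub n (rot n (- int j))) f"
proof -
  have "omg_inv n = cmap (csub n (rot n (- 1)))"
    by (simp add: fun_eq_iff omg_inv_def rot_def[abs_def])
  then show ?thesis
    using assms by (simp add: cmap_csub_rot_funpow)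
qed

lemma csub_rot_sref:
  assumes n: "0 < n" and xy: "(x + c) mod int n = y mod int n"
  shows "csub n (rot n c) (csub n (sref n x) (csub n (rot n (- c)) z)) = csub n (sref n y) z"
proof -
  have "sref n (x + c) = sref n y"
    by (rule sref_cong[OF n xy])
  then have "csub n (rot n c \<circ> (sref n x \<circ> rot n (- c))) = csub n (sref n y)"
    using rot_sref[OF n] by (intro csub_cong) simp
  then show ?thesis
    using n by (simp add: csub_comp idx_perm_rot idx_perm_sref idx_perm_comp)
qed

lemma ealpha_eq_idx: "x < n \<Longrightarrow> ealpha n x = ea n (idx n (int x)) / ea n (idx n (int x + 1))"
  by (simp add: ealpha_def idx_of_less idx_Suc_of_less)

lemma csub_rot_ealpha:
  assumes n: "0 < n" and "x < n" "y < n" and xy: "(int x + c) mod int n = int y mod int n"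
  shows "csub n (rot n c) (ealpha n x) = ealpha n y"
proof -
  have "(int x + 1 + c) mod int n = (int y + 1) mod int n"
    using xy by (metis add.commute add.left_commute mod_add_right_eq)
  then have "idx n (int x + c) = idx n (int y)" "idx n (int x + 1 + c) = idx n (int y + 1)"
    using xy by (simp_all add: idx_eq_iff[OF n])
  then show ?thesis
    using assms idx_in[OF n]
    by (simp add: ealpha_eq_idx ring_endo_divide[OF ring_endo_csub[OF idx_perm_rot[OF n]]] csub_ea
        idx_perm_rot rot_idx)
qed

section \<open>The reflections s_i and the product rho_j\<close>

definition omega_ratio :: "nat \<Rightarrow> int \<Rightarrow> coeff ps" where
  "omega_ratio n x = psmult (Omega (bb n (idx n (x + 1)))) (OmegaInv (bb n (idx n x)))"

lemma cmap_rot_omega_ratio: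
  assumes n: "0 < n" and xy: "(x + c) mod int n = y mod int n"
  shows "cmap (csub n (rot n c)) (omega_ratio n x) = omega_ratio n y"
proof -
  interpret ring_endo "csub n (rot n c)"
    by (rule ring_endo_csub[OF idx_perm_rot[OF n]])
  have "(x + 1 + c) mod int n = (y + 1) mod int n"
    using xy by (metis add.commute add.left_commute mod_add_right_eq)
  then have "idx n (x + c) = idx n y" "idx n (x + 1 + c) = idx n (y + 1)"
    using xy by (simp_all add: idx_eq_iff[OF n])
  then show ?thesis
    by (simp add: omega_ratio_def cmap_psmult cmap_Omega cmap_OmegaInv
        csub_bb[OF idx_perm_rot[OF n] idx_in[OF n]] rot_idx[OF n])
qed

text \<open>The multiplier Omega(b_1|y)/Omega(b_n|y) that s_0 carries on top of s_theta.\<close>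
definition sop_factor :: "nat \<Rightarrow> nat \<Rightarrow> coeff ps" where
  "sop_factor n x = (if x = 0 then omega_ratio n 0 else psone)"

lemma sop_eq:
  assumes "x < n" shows "sop n x f = psmult (sop_factor n x) (cmap (csub n (sref n (int x))) f)"
proof -
  have "idx n 1 = 1" "idx n 0 = n"
    using idx_Suc_of_less[of 0 n] idx_zero[of n] assms by simp_all
  then show ?thesis
    using assms
    by (simp add: sop_def sop_factor_def omega_ratio_def sref_def swp_commute psone_psmult
        idx_of_less idx_Suc_of_less)
qed

lemma sop_conj_rot:
  assumes "0 < n" "x < n" "y < n" and xy: "(int x + c) mod int n = int y mod int n"
  shows "cmap (csub n (rot n c)) (sop n x (cmap (csub n (rot n (- c))) f))
       = psmult (cmap (csub n (rot n c)) (sop_factor n x)) (cmap (csub n (sref n (int y))) f)"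
proof -
  interpret ring_endo "csub n (rot n c)"
    by (rule ring_endo_csub[OF idx_perm_rot[OF \<open>0 < n\<close>]])
  have "cmap (csub n (rot n c)) (cmap (csub n (sref n (int x))) (cmap (csub n (rot n (- c))) f))
      = cmap (csub n (sref n (int y))) f"
    by (simp add: cmap_def csub_rot_sref[OF \<open>0 < n\<close> xy])
  then show ?thesis
    using assms by (simp add: sop_eq cmap_psmult)
qed

lemma rho_eq_prod: "rho n j = ps.F (\<lambda>s. OmegaInv (bb n s)) {n - j + 1..n}"
proof -
  have "set [n - j + 1..<n + 1] = {n - j + 1..n}"
    by auto
  then show ?thesis
    unfolding rho_def foldr_psmult[OF distinct_upt] by simp
qed

lemma cmap_csub_prod_OmegaInv:
  assumes p: "idx_perm n p" and S: "S \<subseteq> {1..n}"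
  shows "cmap (csub n p) (ps.F (\<lambda>s. OmegaInv (bb n s)) S) = ps.F (\<lambda>s. OmegaInv (bb n s)) (p ` S)"
proof -
  have "inj_on p S"
    using p S unfolding idx_perm_def by (meson bij_betw_imp_inj_on inj_on_subset)
  moreover have "cmap (csub n p) (OmegaInv (bb n s)) = OmegaInv (bb n (p s))" if "s \<in> S" for s
    using that S by (simp add: ring_endo.cmap_OmegaInv[OF ring_endo_csub[OF p]] csub_bb[OF p] subset_iff)
  ultimately show ?thesis
    by (simp add: ring_endo.cmap_ps_prod[OF ring_endo_csub[OF p]] ps.reindex cong: ps.cong)
qed

lemma prod_OmegaInv_swp:
  assumes "finite S" "a \<notin> S" "b \<in> S"
  shows "ps.F (\<lambda>s. OmegaInv (g s)) (swp a b ` S)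
       = psmult (ps.F (\<lambda>s. OmegaInv (g s)) S) (psmult (Omega (g b)) (OmegaInv (g a)))"
proof -
  let ?P = "ps.F (\<lambda>s. OmegaInv (g s)) (S - {b})"
  have "ps.F (\<lambda>s. OmegaInv (g s)) S = psmult (OmegaInv (g b)) ?P"
    using assms(1,3) by (rule ps.remove)
  moreover have "ps.F (\<lambda>s. OmegaInv (g s)) (swp a b ` S) = psmult (OmegaInv (g a)) ?P"
    using assms by (simp add: swp_image)
  ultimately show ?thesis
    using Omega_psmult_OmegaInv[of "g b"]
    by (metis ps.assoc ps.commute ps.left_neutral)
qed

lemma cmap_sref_rho:
  assumes n: "0 < n" and i: "i < n"
  shows "cmap (csub n (sref n (int i))) (rho n j)
       = ps.F (\<lambda>s. OmegaInv (bb n s)) (swp (if i = 0 then n else i) (i + 1) ` {n - j + 1..n})"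
proof -
  have "sref n (int i) = swp (if i = 0 then n else i) (i + 1)"
    using i by (simp add: sref_def idx_of_less idx_Suc_of_less)
  then show ?thesis
    unfolding rho_eq_prod by (metis cmap_csub_prod_OmegaInv[OF idx_perm_sref[OF n]] atLeastatMost_subset_iff
        le_add2 order_refl)
qed

lemma cmap_sref_rho_nonzero:
  assumes "0 < i" "i < n" "1 \<le> j" "j \<le> n"
  shows "cmap (csub n (sref n (int i))) (rho n j)
       = (if i + j = n then psmult (rho n j) (omega_ratio n (int i)) else rho n j)"
  unfolding cmap_sref_rho[OF less_trans[OF assms(1,2)] assms(2)]
proof (cases "i + j = n")
  case True
  then have "ps.F (\<lambda>s. OmegaInv (bb n s)) (swp i (i + 1) ` {n - j + 1..n})
      = psmult (rho n j) (psmult (Omega (bb n (i + 1))) (OmegaInv (bb n i)))"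
    using assms by (simp add: rho_eq_prod prod_OmegaInv_swp)
  then show "ps.F (\<lambda>s. OmegaInv (bb n s)) (swp (if i = 0 then n else i) (i + 1) ` {n - j + 1..n})
      = (if i + j = n then psmult (rho n j) (omega_ratio n (int i)) else rho n j)"
    using assms True by (simp add: omega_ratio_def idx_of_less idx_Suc_of_less)
next
  case False
  then have "swp i (i + 1) ` {n - j + 1..n} = {n - j + 1..n}"
    using assms by (intro swp_image_eq) auto
  then show "ps.F (\<lambda>s. OmegaInv (bb n s)) (swp (if i = 0 then n else i) (i + 1) ` {n - j + 1..n})
      = (if i + j = n then psmult (rho n j) (omega_ratio n (int i)) else rho n j)"
    using assms False by (simp add: rho_eq_prod)
qed

lemma omega_ratio_cmap_sref_rho_zero:
  assumes n: "0 < n" and j: "1 \<le> j" "j \<le> n"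
  shows "psmult (omega_ratio n 0) (cmap (csub n (sref n 0)) (rho n j))
       = psmult (rho n j) (if j = n then omega_ratio n 0 else psone)"
proof -
  have sref_rho: "cmap (csub n (sref n 0)) (rho n j) = ps.F (\<lambda>s. OmegaInv (bb n s)) (swp 1 n ` {n - j + 1..n})"
    using cmap_sref_rho[OF n n, of j] by (simp add: swp_commute)
  show ?thesis
  proof (cases "j = n")
    case True
    then have "swp 1 n ` {n - j + 1..n} = {n - j + 1..n}"
      by (intro swp_image_eq) auto
    then show ?thesis
      unfolding sref_rho using True by (simp add: rho_eq_prod ps.commute)
  next
    case False
    have "omega_ratio n 0 = psmult (Omega (bb n 1)) (OmegaInv (bb n n))"
      using idx_zero[OF n] idx_Suc_of_less[OF n] by (simp add: omega_ratio_def)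
    moreover have "ps.F (\<lambda>s. OmegaInv (bb n s)) (swp 1 n ` {n - j + 1..n})
        = psmult (rho n j) (psmult (Omega (bb n n)) (OmegaInv (bb n 1)))"
      using j False by (simp add: rho_eq_prod prod_OmegaInv_swp)
    ultimately show ?thesis
      unfolding sref_rho using False
      by (simp add: ps.left_commute[of _ "rho n j"] Omega_ratio_psmult_inverse)
  qed
qed

lemma cmap_rot_sop_factor:
  assumes "0 < n" "i < n" "1 \<le> j" "j \<le> n"
  shows "cmap (csub n (rot n (- int j))) (sop_factor n ((i + j) mod n))
       = (if i + j = n then omega_ratio n (int i) else psone)"
proof -
  have k0: "(i + j) mod n = 0 \<longleftrightarrow> i + j = n"
    using assms by (cases "i + j < n") (auto simp: le_mod_geq)
  show ?thesis
  proof (cases "i + j = n")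
    case True
    then have "(0 + - int j) - int i = - int n"
      by simp
    then have "(0 + - int j) mod int n = int i mod int n"
      by (simp add: mod_eq_dvd_iff)
    then show ?thesis
      using True k0 by (simp add: sop_factor_def cmap_rot_omega_ratio[OF \<open>0 < n\<close>])
  next
    case False
    then show ?thesis
      using k0 by (simp add: sop_factor_def ring_endo.cmap_psone[OF ring_endo_csub[OF idx_perm_rot]] assms)
  qed
qed

lemma sop_factor_rho:
  assumes "0 < n" "i < n" "1 \<le> j" "j \<le> n"
  shows "psmult (sop_factor n i) (cmap (csub n (sref n (int i))) (rho n j))
       = psmult (rho n j) (cmap (csub n (rot n (- int j))) (sop_factor n ((i + j) mod n)))"
  unfolding cmap_rot_sop_factor[OF assms]
proof (cases "i = 0")
  case True
  then show "psmult (sop_factor n i) (cmap (csub n (sref n (int i))) (rho n j))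
      = psmult (rho n j) (if i + j = n then omega_ratio n (int i) else psone)"
    using assms omega_ratio_cmap_sref_rho_zero[of n j] by (simp add: sop_factor_def)
next
  case False
  then show "psmult (sop_factor n i) (cmap (csub n (sref n (int i))) (rho n j))
      = psmult (rho n j) (if i + j = n then omega_ratio n (int i) else psone)"
    using assms by (simp add: sop_factor_def cmap_sref_rho_nonzero psone_psmult ps.commute)
qed

lemma sop_rho:
  assumes n0: "0 < n" and i: "i < n" and j: "1 \<le> j" "j \<le> n"
  shows "sop n i (psmult (rho n j) f)
       = psmult (rho n j) (cmap (csub n (rot n (- int j))) (sop n ((i + j) mod n) (cmap (csub n (rot n (int j))) f)))"
proof -
  let ?k = "(i + j) mod n" and ?\<sigma> = "csub n (sref n (int i))"
  interpret ring_endo ?\<sigma>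
    by (rule ring_endo_csub[OF idx_perm_sref[OF n0]])
  have "(int ?k + - int j) mod int n = int i mod int n"
    by (rule mod_add_mod_minus)
  then have conj: "cmap (csub n (rot n (- int j))) (sop n ?k (cmap (csub n (rot n (int j))) f))
      = psmult (cmap (csub n (rot n (- int j))) (sop_factor n ?k)) (cmap ?\<sigma> f)"
    using sop_conj_rot[OF n0 _ i, of ?k "- int j"] n0 by simp
  have "sop n i (psmult (rho n j) f) = psmult (psmult (sop_factor n i) (cmap ?\<sigma> (rho n j))) (cmap ?\<sigma> f)"
    using i by (simp add: sop_eq cmap_psmult ps.assoc)
  also have "\<dots> = psmult (rho n j) (psmult (cmap (csub n (rot n (- int j))) (sop_factor n ?k)) (cmap ?\<sigma> f))"
    using n0 i j by (simp add: sop_factor_rho ps.assoc)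
  finally show ?thesis
    by (simp only: conj)
qed

lemma Dop_eq_demazure: "Dop n i = demazure (inverse (1 - ealpha n i)) (sop n i)"
  by (simp add: fun_eq_iff Dop_def demazure_def)

theorem lemma6p1:
  fixes n j i :: nat and f :: "coeff ps"
  assumes "n \<ge> 2" and "1 \<le> j" and "j \<le> n" and "i < n" and "f \<in> Lhat n"
  shows "Dop n i (psmult (rho n j) f)
           = psmult (rho n j) ((omg_inv n ^^ j) (Dop n ((i + j) mod n) ((omg n ^^ j) f)))"
proof -
  let ?k = "(i + j) mod n" and ?\<tau> = "csub n (rot n (- int j))"
  have n0: "0 < n" using assms by simp
  interpret ring_endo ?\<tau>
    by (rule ring_endo_csub[OF idx_perm_rot[OF n0]])
  have "(int ?k + - int j) mod int n = int i mod int n"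
    by (rule mod_add_mod_minus)
  then have "?\<tau> (inverse (1 - ealpha n ?k)) = inverse (1 - ealpha n i)"
    using assms csub_rot_ealpha[OF n0, of ?k i "- int j"]
    by (simp add: ring_endo_inverse[OF ring_endo_axioms] diff one)
  then have "(omg_inv n ^^ j) (Dop n ?k ((omg n ^^ j) f))
      = demazure (inverse (1 - ealpha n i)) (\<lambda>g. cmap ?\<tau> (sop n ?k (cmap (csub n (rot n (int j))) g))) f"
    using n0 by (simp add: omg_funpow omg_inv_funpow Dop_eq_demazure cmap_demazure csub_rot_rot csub_rot_zero)
  then show ?thesis
    using assms n0 by (simp add: Dop_eq_demazure psmult_demazure sop_rho)
qed

end
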